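(* Let $(X_1,\prec_1)$, $(X_2,\prec_2)$ be finite strict posets. (i) If $(X_1\dot\cup X_2,A,\prec)$ is an alignment of these two posets, then $R=\{(x,y)\in X_1\times X_2:\{x,y\}\in A\}$ satisfies (M) and (P'), $A$ consists exactly of the edges $\{x,y\}$ with $(x,y)\in R$, and the columns are exactly the sets $\{x,y\}$ with $(x,y)\in R$ together with the singletons $\{z\}$ of elements $z$ not occurring in any pair of $R$. (ii) Conversely, if $R\subseteq X_1\times X_2$ satisfies (M) and (P'), then for the graph $(X_1\dot\cup X_2,R)$ (with edges $\{x,y\}$ for $(x,y)\in R$), whose columns are the pairs $\{x,y\}$, $(x,y)\in R$, and the singletons of unmatched elements, there exists a strict partial order $\prec$ on its columns such that $(X_1\dot\cup X_2,R,\prec)$ is an alignment of $(X_1,\prec_1)$ and $(X_2,\prec_2)$.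
   Context: Given a family of finite strict posets $(X_a,\prec_a)$, $a\in I$, with $X=\dot\bigcup_a X_a$ and a simple undirected graph $(X,A)$ with set of connected components ("columns") $\mathcal{C}(X,A)$, an alignment is a triple $(X,A,\prec)$ where $\prec$ is a strict partial order on $\mathcal{C}(X,A)$ such that: (P1) every column induces a complete subgraph; (P2) every column contains at most one element of each $X_a$; (P3) if $x\in P$, $y\in Q$ with $x,y\in X_a$ and $x\prec_a y$ then $P\prec Q$; (P4) if $P\prec Q$, $x\in P$, $y\in Q$ with $x,y\in X_a$, then $x\prec_a y$ or $x,y$ are incomparable w.r.t. $\prec_a$. For a relation $R\subseteq X_1\times X_2$: (M) means $(x,y),(x,z)\in R$ imply $y=z$, and $(x,z),(y,z)\in R$ imply $x=y$; (P') means there is a strict partial order $\lessdot$ on $R$ such that for $(u,v),(x,y)\in R$, $u\prec_1 x$ or $v\prec_2 y$ implies $(u,v)\lessdot(x,y)$. *)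

theory Defs
  imports Main
begin

definition strict_po_on :: "'a set \<Rightarrow> ('a \<Rightarrow> 'a \<Rightarrow> bool) \<Rightarrow> bool" where
  "strict_po_on S r \<longleftrightarrow>
     (\<forall>x\<in>S. \<not> r x x) \<and>
     (\<forall>x\<in>S. \<forall>y\<in>S. \<forall>z\<in>S. r x y \<and> r y z \<longrightarrow> r x z)"

definition simple_graph :: "'a set \<Rightarrow> 'a set set \<Rightarrow> bool" where
  "simple_graph X A \<longleftrightarrow> (\<forall>e\<in>A. \<exists>x y. x \<in> X \<and> y \<in> X \<and> x \<noteq> y \<and> e = {x, y})"

definition adj :: "'a set set \<Rightarrow> ('a \<times> 'a) set" where
  "adj A = {(x, y). {x, y} \<in> A}"

definition columns :: "'a set \<Rightarrow> 'a set set \<Rightarrow> 'a set set" where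
  "columns X A = {{y \<in> X. (x, y) \<in> (adj A)\<^sup>*} | x. x \<in> X}"

definition alignment ::
  "'i set \<Rightarrow> ('i \<Rightarrow> 'a set) \<Rightarrow> ('i \<Rightarrow> 'a \<Rightarrow> 'a \<Rightarrow> bool)
     \<Rightarrow> 'a set set \<Rightarrow> ('a set \<Rightarrow> 'a set \<Rightarrow> bool) \<Rightarrow> bool" where
  "alignment I Xf lt A prec \<longleftrightarrow>
     (let X = (\<Union>a\<in>I. Xf a); C = columns X A in
       simple_graph X A \<and>
       strict_po_on C prec \<and>
       \<comment> \<open>(P1)\<close>
       (\<forall>P\<in>C. \<forall>x\<in>P. \<forall>y\<in>P. x \<noteq> y \<longrightarrow> {x, y} \<in> A) \<and>
       \<comment> \<open>(P2)\<close>
       (\<forall>P\<in>C. \<forall>a\<in>I. \<forall>x\<in>P \<inter> Xf a. \<forall>y\<in>P \<inter> Xf a. x = y) \<and>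
       \<comment> \<open>(P3)\<close>
       (\<forall>P\<in>C. \<forall>Q\<in>C. \<forall>a\<in>I. \<forall>x\<in>P. \<forall>y\<in>Q.
          x \<in> Xf a \<and> y \<in> Xf a \<and> lt a x y \<longrightarrow> prec P Q) \<and>
       \<comment> \<open>(P4)\<close>
       (\<forall>P\<in>C. \<forall>Q\<in>C. \<forall>a\<in>I. \<forall>x\<in>P. \<forall>y\<in>Q.
          prec P Q \<and> x \<in> Xf a \<and> y \<in> Xf a \<longrightarrow>
            lt a x y \<or> (\<not> lt a x y \<and> \<not> lt a y x)))"

definition fam2 :: "'a set \<Rightarrow> 'a set \<Rightarrow> nat \<Rightarrow> 'a set" where
  "fam2 X1 X2 i = (if i = 1 then X1 else X2)"

definition ord2 :: "('a \<Rightarrow> 'a \<Rightarrow> bool) \<Rightarrow> ('a \<Rightarrow> 'a \<Rightarrow> bool) \<Rightarrow> nat \<Rightarrow> 'a \<Rightarrow> 'a \<Rightarrow> bool" where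
  "ord2 lt1 lt2 i = (if i = 1 then lt1 else lt2)"

definition prop_M :: "('a \<times> 'b) set \<Rightarrow> bool" where
  "prop_M R \<longleftrightarrow>
     (\<forall>x y z. (x, y) \<in> R \<and> (x, z) \<in> R \<longrightarrow> y = z) \<and>
     (\<forall>x y z. (x, z) \<in> R \<and> (y, z) \<in> R \<longrightarrow> x = y)"

definition prop_P' :: "('a \<Rightarrow> 'a \<Rightarrow> bool) \<Rightarrow> ('b \<Rightarrow> 'b \<Rightarrow> bool) \<Rightarrow> ('a \<times> 'b) set \<Rightarrow> bool" where
  "prop_P' lt1 lt2 R \<longleftrightarrow>
     (\<exists>ld. strict_po_on R ld \<and>
        (\<forall>u v x y. (u, v) \<in> R \<and> (x, y) \<in> R \<and> (lt1 u x \<or> lt2 v y) \<longrightarrow> ld (u, v) (x, y)))"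

definition edges_of :: "('a \<times> 'a) set \<Rightarrow> 'a set set" where
  "edges_of R = {{x, y} | x y. (x, y) \<in> R}"

definition pair_columns :: "'a set \<Rightarrow> 'a set \<Rightarrow> ('a \<times> 'a) set \<Rightarrow> 'a set set" where
  "pair_columns X1 X2 R =
     {{x, y} | x y. (x, y) \<in> R} \<union>
     {{z} | z. z \<in> X1 \<union> X2 \<and> z \<notin> Domain R \<and> z \<notin> Range R}"

end

theory Submission
  imports Defs
begin

(*
  In an alignment of two posets a column contains at most one element of each poset, so every
  edge joins X1 to X2 and the edges form a matching R; ordering two matched pairs by the order
  of their columns yields (P').

  Conversely, for a matching R the columns are the matched pairs and the unmatched singletons.
  Order them by the transitive closure of "some element of P lies below some element of Q in its
  own poset". A cycle would be impossible: where it stays within one poset it is a chain there,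
  and between two consecutive pairs at which it switches posets it is a chain from an end of one
  pair to an end of the next, so by (P') these pairs strictly increase and would form a cycle of
  the strict order on R. Finally (P4) follows from (P3) for any strict order on the columns.
*)

definition family_less :: "'i set \<Rightarrow> ('i \<Rightarrow> 'a set) \<Rightarrow> ('i \<Rightarrow> 'a \<Rightarrow> 'a \<Rightarrow> bool) \<Rightarrow> 'a \<Rightarrow> 'a \<Rightarrow> bool" where
  "family_less I Xf lt x y \<longleftrightarrow> (\<exists>a\<in>I. x \<in> Xf a \<and> y \<in> Xf a \<and> lt a x y)"

lemma alignmentD:
  assumes "alignment I Xf lt A prec"
  defines "X \<equiv> \<Union>a\<in>I. Xf a"
  shows "simple_graph X A" and "strict_po_on (columns X A) prec"
    and "\<lbrakk>P \<in> columns X A; a \<in> I; x \<in> P \<inter> Xf a; y \<in> P \<inter> Xf a\<rbrakk> \<Longrightarrow> x = y"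
    and "\<lbrakk>P \<in> columns X A; Q \<in> columns X A; x \<in> P; y \<in> Q; family_less I Xf lt x y\<rbrakk> \<Longrightarrow> prec P Q"
  using assms unfolding alignment_def Let_def family_less_def by (simp_all, blast+)

text \<open>For a strict order on the columns, (P4) is a consequence of (P3).\<close>
lemma alignmentI:
  fixes I :: "'i set" and Xf :: "'i \<Rightarrow> 'a set"
  defines "X \<equiv> \<Union>a\<in>I. Xf a"
  assumes "simple_graph X A" and prec: "strict_po_on (columns X A) prec"
    and "\<And>P x y. \<lbrakk>P \<in> columns X A; x \<in> P; y \<in> P; x \<noteq> y\<rbrakk> \<Longrightarrow> {x, y} \<in> A"
    and "\<And>P a x y. \<lbrakk>P \<in> columns X A; a \<in> I; x \<in> P \<inter> Xf a; y \<in> P \<inter> Xf a\<rbrakk> \<Longrightarrow> x = y"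
    and P3: "\<And>P Q x y. \<lbrakk>P \<in> columns X A; Q \<in> columns X A; x \<in> P; y \<in> Q; family_less I Xf lt x y\<rbrakk>
      \<Longrightarrow> prec P Q"
  shows "alignment I Xf lt A prec"
proof -
  let ?C = "columns X A"
  have P3': "\<forall>P\<in>?C. \<forall>Q\<in>?C. \<forall>a\<in>I. \<forall>x\<in>P. \<forall>y\<in>Q. x \<in> Xf a \<and> y \<in> Xf a \<and> lt a x y \<longrightarrow> prec P Q"
    using P3 unfolding family_less_def by blast
  have P4: "\<forall>P\<in>?C. \<forall>Q\<in>?C. \<forall>a\<in>I. \<forall>x\<in>P. \<forall>y\<in>Q.
      prec P Q \<and> x \<in> Xf a \<and> y \<in> Xf a \<longrightarrow> lt a x y \<or> (\<not> lt a x y \<and> \<not> lt a y x)"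
  proof (intro ballI impI)
    fix P Q a x y
    assume h: "P \<in> ?C" "Q \<in> ?C" "a \<in> I" "x \<in> P" "y \<in> Q" "prec P Q \<and> x \<in> Xf a \<and> y \<in> Xf a"
    have "\<not> lt a y x"
    proof
      assume "lt a y x"
      then have "prec Q P" using P3' h by blast
      with h prec show False unfolding strict_po_on_def by blast
    qed
    then show "lt a x y \<or> (\<not> lt a x y \<and> \<not> lt a y x)" by blast
  qed
  moreover have "\<forall>P\<in>?C. \<forall>x\<in>P. \<forall>y\<in>P. x \<noteq> y \<longrightarrow> {x, y} \<in> A"
    using assms(4) by blast
  moreover have "\<forall>P\<in>?C. \<forall>a\<in>I. \<forall>x\<in>P \<inter> Xf a. \<forall>y\<in>P \<inter> Xf a. x = y"
    using assms(5) by blast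
  ultimately show ?thesis
    unfolding alignment_def Let_def X_def[symmetric]
    using assms(2) prec P3' by (intro conjI) assumption+
qed

lemma strict_po_on_inv_image:
  assumes "strict_po_on C r" "f ` S \<subseteq> C"
  shows "strict_po_on S (\<lambda>p q. r (f p) (f q))"
  using assms unfolding strict_po_on_def by blast

definition component :: "'a set \<Rightarrow> 'a set set \<Rightarrow> 'a \<Rightarrow> 'a set" where
  "component X A x = {y \<in> X. (x, y) \<in> (adj A)\<^sup>*}"

lemma columns_eq_component_image: "columns X A = component X A ` X"
  by (auto simp: columns_def component_def)

lemma self_in_component: "x \<in> X \<Longrightarrow> x \<in> component X A x"
  by (simp add: component_def)

lemma component_in_columns: "x \<in> X \<Longrightarrow> component X A x \<in> columns X A"
  by (simp add: columns_eq_component_image)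

lemma simple_graph_edgeD: "simple_graph X A \<Longrightarrow> {x, y} \<in> A \<Longrightarrow> x \<in> X \<and> y \<in> X \<and> x \<noteq> y"
  by (auto simp: simple_graph_def doubleton_eq_iff)

lemma component_eq_if_edge:
  assumes "{x, y} \<in> A"
  shows "component X A x = component X A y"
proof -
  have "(x, y) \<in> (adj A)\<^sup>*" "(y, x) \<in> (adj A)\<^sup>*"
    using assms by (auto simp: adj_def insert_commute)
  then show ?thesis
    unfolding component_def by (blast intro: rtrancl_trans)
qed

lemma in_component_if_edge:
  assumes "simple_graph X A" "{x, y} \<in> A"
  shows "y \<in> component X A x"
proof -
  have "y \<in> X"
    using simple_graph_edgeD[OF assms] by blast
  then show ?thesis
    using component_eq_if_edge[OF assms(2), of X] self_in_component by simp
qed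

section \<open>The graph of a bipartite matching\<close>

lemma adj_edges_of: "adj (edges_of R) = R \<union> R\<inverse>"
  by (auto simp: adj_def edges_of_def doubleton_eq_iff)

lemma rtrancl_matching:
  assumes "R \<subseteq> X1 \<times> X2" "X1 \<inter> X2 = {}" "prop_M R"
  shows "(R \<union> R\<inverse>)\<^sup>* = (R \<union> R\<inverse>)\<^sup>="
proof -
  have "trans ((R \<union> R\<inverse>)\<^sup>=)"
    using assms unfolding trans_def prop_M_def by blast
  then have "((R \<union> R\<inverse>)\<^sup>=)\<^sup>+ = (R \<union> R\<inverse>)\<^sup>=" by (rule trancl_id)
  then show ?thesis by (metis rtrancl_reflcl reflcl_trancl Un_absorb Un_assoc)
qed

lemma component_edges_of:
  assumes "R \<subseteq> X1 \<times> X2" "X1 \<inter> X2 = {}" "prop_M R"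
  shows "component (X1 \<union> X2) (edges_of R) x = {y \<in> X1 \<union> X2. y = x \<or> (x, y) \<in> R \<or> (y, x) \<in> R}"
  using rtrancl_matching[OF assms] by (auto simp: component_def adj_edges_of)

lemma columns_edges_of:
  assumes "R \<subseteq> X1 \<times> X2" "X1 \<inter> X2 = {}" "prop_M R"
  shows "columns (X1 \<union> X2) (edges_of R) = pair_columns X1 X2 R"
proof -
  have comp_pair: "component (X1 \<union> X2) (edges_of R) x = {x, y}"
    "component (X1 \<union> X2) (edges_of R) y = {x, y}" if "(x, y) \<in> R" for x y
    using that assms unfolding component_edges_of[OF assms] prop_M_def by blast+
  have comp_single: "component (X1 \<union> X2) (edges_of R) z = {z}"
    if "z \<notin> Domain R" "z \<notin> Range R" "z \<in> X1 \<union> X2" for z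
    using that unfolding component_edges_of[OF assms] by blast
  show ?thesis
  proof
    show "columns (X1 \<union> X2) (edges_of R) \<subseteq> pair_columns X1 X2 R"
    proof
      fix P assume "P \<in> columns (X1 \<union> X2) (edges_of R)"
      then obtain x where x: "x \<in> X1 \<union> X2" and P: "P = component (X1 \<union> X2) (edges_of R) x"
        unfolding columns_eq_component_image by blast
      consider y where "(x, y) \<in> R" | y where "(y, x) \<in> R" | "x \<notin> Domain R" "x \<notin> Range R"
        by blast
      then show "P \<in> pair_columns X1 X2 R"
        by cases (use P x comp_pair comp_single in \<open>auto simp: pair_columns_def\<close>)
    qed
    show "pair_columns X1 X2 R \<subseteq> columns (X1 \<union> X2) (edges_of R)"
      unfolding columns_eq_component_image pair_columns_def
      using comp_pair(1) comp_single assms(1) by blast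
  qed
qed

lemma simple_graph_edges_of:
  assumes "R \<subseteq> X1 \<times> X2" "X1 \<inter> X2 = {}"
  shows "simple_graph (X1 \<union> X2) (edges_of R)"
  using assms unfolding simple_graph_def edges_of_def by blast

lemma pair_columns_cases:
  assumes "P \<in> pair_columns X1 X2 R" "x \<in> P" "y \<in> P"
  obtains "x = y" | n where "n \<in> R" "x \<in> {fst n, snd n}" "y \<in> {fst n, snd n}"
  using assms unfolding pair_columns_def by fastforce

lemma pair_columns_edge:
  assumes "P \<in> pair_columns X1 X2 R" "x \<in> P" "y \<in> P" "x \<noteq> y"
  shows "{x, y} \<in> edges_of R"
  using assms unfolding pair_columns_def edges_of_def by (auto simp: doubleton_eq_iff)

lemma pair_columns_unique:
  assumes "R \<subseteq> X1 \<times> X2" "X1 \<inter> X2 = {}" "P \<in> pair_columns X1 X2 R" "x \<in> P" "y \<in> P"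
    and "x \<in> X1 \<and> y \<in> X1 \<or> x \<in> X2 \<and> y \<in> X2"
  shows "x = y"
  using assms(3-5)
proof (cases rule: pair_columns_cases)
  case (2 n)
  then have "fst n \<in> X1" "snd n \<in> X2"
    using assms(1) by auto
  then show ?thesis
    using 2 assms(2,6) by auto
qed

section \<open>From an alignment of two posets to a matching\<close>

lemma UN_fam2: "(\<Union>a\<in>{1::nat, 2}. fam2 X1 X2 a) = X1 \<union> X2"
  by (auto simp: fam2_def)

lemma family_less_fam2:
  "family_less {1::nat, 2} (fam2 X1 X2) (ord2 lt1 lt2) x y \<longleftrightarrow>
     x \<in> X1 \<and> y \<in> X1 \<and> lt1 x y \<or> x \<in> X2 \<and> y \<in> X2 \<and> lt2 x y"
  by (auto simp: family_less_def fam2_def ord2_def)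

lemma alignment_fam2D:
  assumes "alignment {1::nat, 2} (fam2 X1 X2) (ord2 lt1 lt2) A prec"
  shows "simple_graph (X1 \<union> X2) A" and "strict_po_on (columns (X1 \<union> X2) A) prec"
    and "\<lbrakk>P \<in> columns (X1 \<union> X2) A; x \<in> P; y \<in> P; x \<in> X1 \<and> y \<in> X1 \<or> x \<in> X2 \<and> y \<in> X2\<rbrakk> \<Longrightarrow> x = y"
    and "\<lbrakk>P \<in> columns (X1 \<union> X2) A; Q \<in> columns (X1 \<union> X2) A; x \<in> P; y \<in> Q;
          x \<in> X1 \<and> y \<in> X1 \<and> lt1 x y \<or> x \<in> X2 \<and> y \<in> X2 \<and> lt2 x y\<rbrakk> \<Longrightarrow> prec P Q"
proof -
  note D = alignmentD[OF assms, unfolded UN_fam2 family_less_fam2]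
  show "simple_graph (X1 \<union> X2) A" "strict_po_on (columns (X1 \<union> X2) A) prec"
    by (fact D(1), fact D(2))
  show "\<lbrakk>P \<in> columns (X1 \<union> X2) A; x \<in> P; y \<in> P; x \<in> X1 \<and> y \<in> X1 \<or> x \<in> X2 \<and> y \<in> X2\<rbrakk> \<Longrightarrow> x = y"
    using D(3)[of P 1 x y] D(3)[of P 2 x y] by (auto simp: fam2_def)
  show "\<lbrakk>P \<in> columns (X1 \<union> X2) A; Q \<in> columns (X1 \<union> X2) A; x \<in> P; y \<in> Q;
          x \<in> X1 \<and> y \<in> X1 \<and> lt1 x y \<or> x \<in> X2 \<and> y \<in> X2 \<and> lt2 x y\<rbrakk> \<Longrightarrow> prec P Q"
    by (fact D(4))
qed

definition matched_pairs :: "'a set \<Rightarrow> 'a set \<Rightarrow> 'a set set \<Rightarrow> ('a \<times> 'a) set" where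
  "matched_pairs X1 X2 A = {(x, y). x \<in> X1 \<and> y \<in> X2 \<and> {x, y} \<in> A}"

context
  fixes X1 X2 :: "'a set" and lt1 lt2 :: "'a \<Rightarrow> 'a \<Rightarrow> bool" and A prec
  assumes aligned: "alignment {1::nat, 2} (fam2 X1 X2) (ord2 lt1 lt2) A prec"
begin

lemma aligned_component_unique:
  assumes "x \<in> X1 \<union> X2" "y \<in> component (X1 \<union> X2) A x" "z \<in> component (X1 \<union> X2) A x"
    and "y \<in> X1 \<and> z \<in> X1 \<or> y \<in> X2 \<and> z \<in> X2"
  shows "y = z"
  using alignment_fam2D(3)[OF aligned component_in_columns[OF assms(1)] assms(2-4)] .

lemma aligned_prec_component:
  assumes "x \<in> X1 \<union> X2" "y \<in> X1 \<union> X2" "x \<in> X1 \<and> y \<in> X1 \<and> lt1 x y \<or> x \<in> X2 \<and> y \<in> X2 \<and> lt2 x y"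
  shows "prec (component (X1 \<union> X2) A x) (component (X1 \<union> X2) A y)"
  using alignment_fam2D(4)[OF aligned] assms component_in_columns self_in_component by meson

lemma matched_pairs_prop_M: "prop_M (matched_pairs X1 X2 A)"
proof -
  note G = alignment_fam2D(1)[OF aligned]
  have "y = z" if "(x, y) \<in> matched_pairs X1 X2 A" "(x, z) \<in> matched_pairs X1 X2 A" for x y z
  proof -
    have "x \<in> X1" "y \<in> X2" "z \<in> X2" "{x, y} \<in> A" "{x, z} \<in> A"
      using that by (auto simp: matched_pairs_def)
    then show ?thesis
      using aligned_component_unique[of x y z] in_component_if_edge[OF G] by blast
  qed
  moreover have "x = y" if "(x, z) \<in> matched_pairs X1 X2 A" "(y, z) \<in> matched_pairs X1 X2 A" for x y z
  proof -
    have "z \<in> X2" "x \<in> X1" "y \<in> X1" "{z, x} \<in> A" "{z, y} \<in> A"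
      using that by (auto simp: matched_pairs_def insert_commute)
    then show ?thesis
      using aligned_component_unique[of z x y] in_component_if_edge[OF G] by blast
  qed
  ultimately show ?thesis
    unfolding prop_M_def by blast
qed

lemma edges_of_matched_pairs: "edges_of (matched_pairs X1 X2 A) = A"
proof
  note G = alignment_fam2D(1)[OF aligned]
  show "A \<subseteq> edges_of (matched_pairs X1 X2 A)"
  proof
    fix e assume "e \<in> A"
    with G obtain x y where "e = {x, y}"
      unfolding simple_graph_def by blast
    with \<open>e \<in> A\<close> simple_graph_edgeD[OF G]
    have e: "e = {x, y}" "{x, y} \<in> A" "x \<in> X1 \<union> X2" "y \<in> X1 \<union> X2" "x \<noteq> y"
      by simp_all
    have "x \<in> component (X1 \<union> X2) A x" "y \<in> component (X1 \<union> X2) A x"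
      using self_in_component[OF e(3)] in_component_if_edge[OF G e(2)] .
    then have "\<not> (x \<in> X1 \<and> y \<in> X1)" "\<not> (x \<in> X2 \<and> y \<in> X2)"
      using aligned_component_unique[OF e(3)] e(5) by blast+
    then consider "(x, y) \<in> matched_pairs X1 X2 A" | "(y, x) \<in> matched_pairs X1 X2 A"
      using e(2-4) by (auto simp: matched_pairs_def insert_commute)
    then show "e \<in> edges_of (matched_pairs X1 X2 A)"
      unfolding edges_of_def e(1) by cases (auto simp: insert_commute)
  qed
qed (auto simp: edges_of_def matched_pairs_def)

lemma matched_pairs_prop_P': "prop_P' lt1 lt2 (matched_pairs X1 X2 A)"
proof -
  let ?col = "\<lambda>p. component (X1 \<union> X2) A (fst p)"
  have "?col ` matched_pairs X1 X2 A \<subseteq> columns (X1 \<union> X2) A"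
    by (auto simp: matched_pairs_def intro: component_in_columns)
  then have "strict_po_on (matched_pairs X1 X2 A) (\<lambda>p q. prec (?col p) (?col q))"
    by (rule strict_po_on_inv_image[OF alignment_fam2D(2)[OF aligned]])
  moreover have "prec (?col (u, v)) (?col (x, y))"
    if "(u, v) \<in> matched_pairs X1 X2 A" "(x, y) \<in> matched_pairs X1 X2 A" "lt1 u x \<or> lt2 v y" for u v x y
  proof -
    have uv: "u \<in> X1" "v \<in> X2" "{u, v} \<in> A" and xy: "x \<in> X1" "y \<in> X2" "{x, y} \<in> A"
      using that(1,2) by (auto simp: matched_pairs_def)
    from that(3) show ?thesis
    proof
      assume "lt1 u x"
      then show ?thesis
        using aligned_prec_component[of u x] uv xy by simp
    next
      assume "lt2 v y"
      then show ?thesis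
        using aligned_prec_component[of v y] uv xy
          component_eq_if_edge[OF uv(3)] component_eq_if_edge[OF xy(3)] by simp
    qed
  qed
  ultimately show ?thesis
    unfolding prop_P'_def by blast
qed

end

section \<open>From a matching with (P') to an alignment\<close>

locale ordered_matching =
  fixes X1 X2 :: "'a set" and lt1 lt2 :: "'a \<Rightarrow> 'a \<Rightarrow> bool"
    and R :: "('a \<times> 'a) set" and ld :: "'a \<times> 'a \<Rightarrow> 'a \<times> 'a \<Rightarrow> bool"
  assumes disjoint: "X1 \<inter> X2 = {}"
    and po1: "strict_po_on X1 lt1" and po2: "strict_po_on X2 lt2"
    and R_sub: "R \<subseteq> X1 \<times> X2"
    and ld_po: "strict_po_on R ld"
    and ld_mono: "\<And>u v x y. \<lbrakk>(u, v) \<in> R; (x, y) \<in> R; lt1 u x \<or> lt2 v y\<rbrakk> \<Longrightarrow> ld (u, v) (x, y)"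
begin

definition below :: "'a \<Rightarrow> 'a \<Rightarrow> bool" where
  "below x y \<longleftrightarrow> x \<in> X1 \<and> y \<in> X1 \<and> lt1 x y \<or> x \<in> X2 \<and> y \<in> X2 \<and> lt2 x y"

lemma below_irrefl: "\<not> below x x"
  using po1 po2 unfolding below_def strict_po_on_def by blast

lemma below_trans: "below x y \<Longrightarrow> below y z \<Longrightarrow> below x z"
  using po1 po2 disjoint unfolding below_def strict_po_on_def by blast

lemma ld_trans: "\<lbrakk>n \<in> R; k \<in> R; m \<in> R; ld n k; ld k m\<rbrakk> \<Longrightarrow> ld n m"
  using ld_po unfolding strict_po_on_def by blast

lemma ld_cycle: "\<lbrakk>n \<in> R; k \<in> R; n = k \<or> ld n k; ld k n\<rbrakk> \<Longrightarrow> False"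
  using ld_po unfolding strict_po_on_def by blast

lemma below_imp_ld:
  assumes "n \<in> R" "k \<in> R" "x \<in> {fst n, snd n}" "z \<in> {fst k, snd k}" "below x z"
  shows "ld n k"
proof -
  obtain a b c d where nk: "n = (a, b)" "k = (c, d)" by fastforce
  have "a \<in> X1" "b \<in> X2" "c \<in> X1" "d \<in> X2"
    using assms(1,2) R_sub nk by auto
  then have "lt1 a c \<or> lt2 b d"
    using assms(3-5) disjoint nk unfolding below_def by auto
  then show ?thesis
    using ld_mono assms(1,2) nk by blast
qed

text \<open>\<open>leads_to x y\<close> abstracts a path of comparabilities from \<open>x\<close> to \<open>y\<close> through the columns:
  either it stays in one poset, or it first reaches an end of the pair \<open>n\<close>, last leaves an end
  of the pair \<open>k\<close>, and the pairs visited in between climb along \<open>ld\<close>.\<close>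
definition leads_to :: "'a \<Rightarrow> 'a \<Rightarrow> bool" where
  "leads_to x y \<longleftrightarrow> below x y \<or>
     (\<exists>n\<in>R. \<exists>k\<in>R. \<exists>u\<in>{fst n, snd n}. \<exists>v\<in>{fst k, snd k}. below x u \<and> (n = k \<or> ld n k) \<and> below v y)"

lemma leads_to_cases:
  assumes "leads_to x y"
  obtains "below x y"
  | n k u v where "n \<in> R" "k \<in> R" "u \<in> {fst n, snd n}" "v \<in> {fst k, snd k}"
      "below x u" "n = k \<or> ld n k" "below v y"
  using assms unfolding leads_to_def by blast

lemma leads_to_extend:
  assumes "leads_to x y" "Q \<in> pair_columns X1 X2 R" "y \<in> Q" "q \<in> Q" "below q z"
  shows "leads_to x z"
  using assms(2-4)
proof (cases rule: pair_columns_cases)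
  case 1
  from assms(1) show ?thesis
  proof (cases rule: leads_to_cases)
    case 1
    then show ?thesis
      using \<open>y = q\<close> assms(5) below_trans unfolding leads_to_def by blast
  next
    case (2 n k u v)
    then show ?thesis
      using \<open>y = q\<close> assms(5) below_trans unfolding leads_to_def by blast
  qed
next
  case (2 m)
  from assms(1) show ?thesis
  proof (cases rule: leads_to_cases)
    case 1
    then show ?thesis
      using 2 assms(5) unfolding leads_to_def by blast
  next
    case (2 n k u v)
    then have "ld k m"
      using below_imp_ld \<open>m \<in> R\<close> \<open>y \<in> {fst m, snd m}\<close> by blast
    with 2 have "ld n m"
      using ld_trans \<open>m \<in> R\<close> by blast
    then show ?thesis
      using 2 \<open>m \<in> R\<close> \<open>q \<in> {fst m, snd m}\<close> assms(5) unfolding leads_to_def by blast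
  qed
qed

lemma not_leads_to_in_column:
  assumes "P \<in> pair_columns X1 X2 R" "x \<in> P" "y \<in> P" "leads_to x y"
  shows False
  using assms(1-3)
proof (cases rule: pair_columns_cases)
  case 1
  from assms(4) show False
  proof (cases rule: leads_to_cases)
    case 1
    then show False
      using \<open>x = y\<close> below_irrefl by simp
  next
    case (2 n k u v)
    then have "ld k n"
      using \<open>x = y\<close> below_trans below_imp_ld by blast
    with 2 show False
      using ld_cycle by blast
  qed
next
  case (2 m)
  from assms(4) show False
  proof (cases rule: leads_to_cases)
    case 1
    then show False
      using 2 below_imp_ld ld_cycle by blast
  next
    case (2 n k u v)
    then have "ld m n" "ld k m"
      using below_imp_ld \<open>m \<in> R\<close> \<open>x \<in> {fst m, snd m}\<close> \<open>y \<in> {fst m, snd m}\<close> by blast+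
    with 2 show False
      using ld_trans ld_cycle \<open>m \<in> R\<close> by metis
  qed
qed

definition column_step :: "('a set \<times> 'a set) set" where
  "column_step = {(P, Q). P \<in> pair_columns X1 X2 R \<and> Q \<in> pair_columns X1 X2 R \<and> (\<exists>x\<in>P. \<exists>y\<in>Q. below x y)}"

lemma column_step_trancl_leads_to:
  assumes "(P, Q) \<in> column_step\<^sup>+"
  shows "\<exists>x\<in>P. \<exists>y\<in>Q. leads_to x y"
  using assms
proof (induction rule: trancl_induct)
  case (base Q)
  then show ?case
    unfolding column_step_def leads_to_def by blast
next
  case (step Q S)
  then show ?case
    using leads_to_extend unfolding column_step_def by blast
qed

lemma column_step_trancl_irrefl: "(P, P) \<notin> column_step\<^sup>+"
proof
  assume "(P, P) \<in> column_step\<^sup>+"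
  moreover from this have "P \<in> pair_columns X1 X2 R"
    by (auto dest: tranclD simp: column_step_def)
  ultimately show False
    using column_step_trancl_leads_to not_leads_to_in_column by meson
qed

lemma alignment_column_step:
  assumes "prop_M R"
  shows "alignment {1::nat, 2} (fam2 X1 X2) (ord2 lt1 lt2) (edges_of R) (\<lambda>P Q. (P, Q) \<in> column_step\<^sup>+)"
proof (rule alignmentI[where I = "{1::nat, 2}" and Xf = "fam2 X1 X2" and A = "edges_of R"
      and lt = "ord2 lt1 lt2",
      unfolded UN_fam2 columns_edges_of[OF R_sub disjoint assms] family_less_fam2])
  show "simple_graph (X1 \<union> X2) (edges_of R)"
    using simple_graph_edges_of[OF R_sub disjoint] .
  show "strict_po_on (pair_columns X1 X2 R) (\<lambda>P Q. (P, Q) \<in> column_step\<^sup>+)"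
    unfolding strict_po_on_def by (metis column_step_trancl_irrefl trancl_trans)
  show "\<And>P x y. \<lbrakk>P \<in> pair_columns X1 X2 R; x \<in> P; y \<in> P; x \<noteq> y\<rbrakk> \<Longrightarrow> {x, y} \<in> edges_of R"
    by (rule pair_columns_edge)
  show "x = y" if "P \<in> pair_columns X1 X2 R" "a \<in> {1, 2}" "x \<in> P \<inter> fam2 X1 X2 a" "y \<in> P \<inter> fam2 X1 X2 a"
    for P a x y
    using that pair_columns_unique[OF R_sub disjoint, of P x y] by (cases "a = 1") (simp_all add: fam2_def)
  show "(P, Q) \<in> column_step\<^sup>+"
    if "P \<in> pair_columns X1 X2 R" "Q \<in> pair_columns X1 X2 R" "x \<in> P" "y \<in> Q"
      "x \<in> X1 \<and> y \<in> X1 \<and> lt1 x y \<or> x \<in> X2 \<and> y \<in> X2 \<and> lt2 x y" for P Q x y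
  proof (rule r_into_trancl)
    show "(P, Q) \<in> column_step"
      using that unfolding column_step_def below_def by blast
  qed
qed

end

lemma alignment_of_matching:
  assumes "X1 \<inter> X2 = {}" "strict_po_on X1 lt1" "strict_po_on X2 lt2"
    and "R \<subseteq> X1 \<times> X2" "prop_M R" "prop_P' lt1 lt2 R"
  shows "\<exists>prec. alignment {1::nat, 2} (fam2 X1 X2) (ord2 lt1 lt2) (edges_of R) prec"
proof -
  from assms(6) obtain ld where "strict_po_on R ld"
    and "\<And>u v x y. \<lbrakk>(u, v) \<in> R; (x, y) \<in> R; lt1 u x \<or> lt2 v y\<rbrakk> \<Longrightarrow> ld (u, v) (x, y)"
    unfolding prop_P'_def by blast
  with assms(1-4) interpret ordered_matching X1 X2 lt1 lt2 R ld
    by unfold_locales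
  show ?thesis
    using alignment_column_step[OF assms(5)] by (rule exI[where x = "\<lambda>P Q. (P, Q) \<in> column_step\<^sup>+"])
qed

theorem lemma8:
  fixes X1 X2 :: "'a set" and lt1 lt2 :: "'a \<Rightarrow> 'a \<Rightarrow> bool"
  assumes "finite X1" and "finite X2" and "X1 \<inter> X2 = {}"
    and "strict_po_on X1 lt1" and "strict_po_on X2 lt2"
  shows
    "(\<forall>A prec. alignment {1, 2} (fam2 X1 X2) (ord2 lt1 lt2) A prec \<longrightarrow>
        (let R = {(x, y). x \<in> X1 \<and> y \<in> X2 \<and> {x, y} \<in> A} in
          prop_M R \<and> prop_P' lt1 lt2 R \<and> A = edges_of R \<and>
          columns (X1 \<union> X2) A = pair_columns X1 X2 R))
     \<and>
     (\<forall>R. R \<subseteq> X1 \<times> X2 \<and> prop_M R \<and> prop_P' lt1 lt2 R \<longrightarrow>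
        columns (X1 \<union> X2) (edges_of R) = pair_columns X1 X2 R \<and>
        (\<exists>prec. alignment {1, 2} (fam2 X1 X2) (ord2 lt1 lt2) (edges_of R) prec))"
proof (intro conjI allI impI)
  fix A prec
  assume aligned: "alignment {1, 2} (fam2 X1 X2) (ord2 lt1 lt2) A prec"
  let ?R = "matched_pairs X1 X2 A"
  have M: "prop_M ?R" and E: "edges_of ?R = A"
    using matched_pairs_prop_M[OF aligned] edges_of_matched_pairs[OF aligned] .
  have "columns (X1 \<union> X2) A = pair_columns X1 X2 ?R"
    using columns_edges_of[OF _ assms(3) M] E by (auto simp: matched_pairs_def)
  with M E matched_pairs_prop_P'[OF aligned]
  show "let R = {(x, y). x \<in> X1 \<and> y \<in> X2 \<and> {x, y} \<in> A} in
          prop_M R \<and> prop_P' lt1 lt2 R \<and> A = edges_of R \<and> columns (X1 \<union> X2) A = pair_columns X1 X2 R"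
    unfolding matched_pairs_def Let_def by simp
next
  fix R
  assume "R \<subseteq> X1 \<times> X2 \<and> prop_M R \<and> prop_P' lt1 lt2 R"
  then have R: "R \<subseteq> X1 \<times> X2" "prop_M R" "prop_P' lt1 lt2 R"
    by simp_all
  show "columns (X1 \<union> X2) (edges_of R) = pair_columns X1 X2 R"
    using columns_edges_of[OF R(1) assms(3) R(2)] .
  show "\<exists>prec. alignment {1, 2} (fam2 X1 X2) (ord2 lt1 lt2) (edges_of R) prec"
    using alignment_of_matching[OF assms(3-5) R] .
qed

end
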